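(* Let $v>9$ be an integer with $v\equiv 1 \pmod 4$. If there exists an $\mathrm{STS}(v)$ admitting a zero-sum $k$-flow for some integer $k\ge 2$, then there exists an $\mathrm{STS}(2v+7)$ admitting a zero-sum $k$-flow.
   Context: A Steiner triple system $\mathrm{STS}(v)$ is a pair $(X,\mathcal{B})$ where $|X|=v$ and $\mathcal{B}$ is a collection of 3-subsets (blocks) of $X$ such that every 2-subset of $X$ lies in exactly one block. For a design $(X,\mathcal{B})$ and an integer $n\ge 2$, a zero-sum $n$-flow is a map $f:\mathcal{B}\to\{\pm1,\pm2,\ldots,\pm(n-1)\}$ such that for every point $x\in X$, $\sum_{B\in\mathcal{B},\,x\in B} f(B)=0$. *)

theory Defs
  imports Main
begin

definition is_STS :: "'a set \<Rightarrow> 'a set set \<Rightarrow> bool" where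
  "is_STS X B \<longleftrightarrow> finite X \<and>
     (\<forall>b\<in>B. b \<subseteq> X \<and> card b = 3) \<and>
     (\<forall>x\<in>X. \<forall>y\<in>X. x \<noteq> y \<longrightarrow> (\<exists>!b. b \<in> B \<and> {x, y} \<subseteq> b))"

definition STS :: "nat \<Rightarrow> 'a set \<Rightarrow> 'a set set \<Rightarrow> bool" where
  "STS v X B \<longleftrightarrow> is_STS X B \<and> card X = v"

definition zero_sum_flow :: "nat \<Rightarrow> 'a set \<Rightarrow> 'a set set \<Rightarrow> ('a set \<Rightarrow> int) \<Rightarrow> bool" where
  "zero_sum_flow n X B f \<longleftrightarrow> n \<ge> 2 \<and>
     (\<forall>b\<in>B. f b \<noteq> 0 \<and> \<bar>f b\<bar> \<le> int n - 1) \<and>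
     (\<forall>x\<in>X. (\<Sum>b\<in>{b\<in>B. x \<in> b}. f b) = 0)"

end

theory Submission
  imports Defs
begin

(* Put the old system on X = Z_v and add a copy Y of Z_v and the seven points S of a Fano
   plane. The new blocks are {x_j, y_(j-t), y_(j+t)} for 4 <= t <= (v-1)/2,
   {x_j, y_(j+e-3), s_e}, the triangles {y_i, y_(i+2), y_(i+6)} and the Fano lines. Every pair
   not inside X lies in one of them, and there are exactly C(2v+7, 2)/3 blocks in total, so every
   pair lies in exactly one block.
   The flow keeps the old values and puts a sign on each new block, essentially (-1)^j, or (-1)^t
   for t >= 7. Around every point the signs cancel in pairs; v = 1 (mod 4) makes the tail
   t = 7 .. (v-1)/2 cancel, and a few flipped signs near j = v - 1 repair the one place where
   (-1)^j fails to alternate on the odd cycle Z_v. All new values are +-1, so the extension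
   is a zero-sum k-flow for every k >= 2. *)

section \<open>Steiner triple systems by counting\<close>

lemma sum_card_blocks_containing_pairs:
  assumes "finite X" and blocks: "\<forall>b\<in>B. b \<subseteq> X \<and> card b = 3"
  shows "(\<Sum>p\<in>{p. p \<subseteq> X \<and> card p = 2}. card {b\<in>B. p \<subseteq> b}) = 3 * card B"
proof -
  let ?P = "{p. p \<subseteq> X \<and> card p = 2}"
  have finB: "finite B" using blocks \<open>finite X\<close> by (intro finite_subset[of B "Pow X"]) auto
  have finP: "finite ?P" using \<open>finite X\<close> by simp
  have "(\<Sum>p\<in>?P. card {b\<in>B. p \<subseteq> b}) = (\<Sum>p\<in>?P. \<Sum>b\<in>B. if p \<subseteq> b then 1 else 0)"
    using finB by (simp add: sum.inter_filter[symmetric])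
  also have "\<dots> = (\<Sum>b\<in>B. \<Sum>p\<in>?P. if p \<subseteq> b then 1 else 0)" by (rule sum.swap)
  also have "\<dots> = (\<Sum>b\<in>B. card {p. p \<subseteq> b \<and> card p = 2})"
  proof (rule sum.cong)
    fix b assume "b \<in> B"
    then have "{p \<in> ?P. p \<subseteq> b} = {p. p \<subseteq> b \<and> card p = 2}" using blocks by blast
    with finP show "(\<Sum>p\<in>?P. if p \<subseteq> b then 1 else 0) = card {p. p \<subseteq> b \<and> card p = 2}"
      by (simp add: sum.inter_filter[symmetric])
  qed simp
  also have "\<dots> = (\<Sum>b\<in>B. 3)"
  proof (rule sum.cong)
    fix b assume "b \<in> B"
    then have "finite b" "card b = 3" using blocks card.infinite by fastforce+
    then show "card {p. p \<subseteq> b \<and> card p = 2} = 3" by (simp add: n_subsets choose_two)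
  qed simp
  finally show ?thesis by simp
qed

lemma is_STS_pair_count:
  assumes "is_STS X B" "x \<in> X" "y \<in> X" "x \<noteq> y"
  shows "card {b\<in>B. {x, y} \<subseteq> b} = 1"
proof -
  obtain b where "b \<in> B" "{x, y} \<subseteq> b" "\<And>c. c \<in> B \<Longrightarrow> {x, y} \<subseteq> c \<Longrightarrow> c = b"
    using assms unfolding is_STS_def by metis
  then have "{b\<in>B. {x, y} \<subseteq> b} = {b}" by blast
  then show ?thesis by simp
qed

lemma is_STS_cover:
  assumes "is_STS X B" "x \<in> X" "y \<in> X" "x \<noteq> y"
  shows "\<exists>b\<in>B. {x, y} \<subseteq> b"
proof -
  have "\<exists>!b. b \<in> B \<and> {x, y} \<subseteq> b" using assms unfolding is_STS_def by simp
  then show ?thesis by (metis ex1_implies_ex)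
qed

lemma is_STS_finite_blocks: "is_STS X B \<Longrightarrow> finite B"
  unfolding is_STS_def by (intro finite_subset[of B "Pow X"]) auto

lemma STS_card_blocks:
  assumes "is_STS X B"
  shows "3 * card B = card X choose 2"
proof -
  have finX: "finite X" and blocks: "\<forall>b\<in>B. b \<subseteq> X \<and> card b = 3"
    using assms unfolding is_STS_def by simp_all
  have "card {b\<in>B. p \<subseteq> b} = 1" if "p \<subseteq> X" "card p = 2" for p
    using that is_STS_pair_count[OF assms] by (auto simp: card_2_iff)
  then have "3 * card B = (\<Sum>p\<in>{p. p \<subseteq> X \<and> card p = 2}. 1)"
    using sum_card_blocks_containing_pairs[OF finX blocks] by simp
  also have "\<dots> = card X choose 2" using finX by (simp add: n_subsets)
  finally show ?thesis .
qed

lemma card_blocks_containing_pair_eq_1: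
  assumes finX: "finite X" and blocks: "\<forall>b\<in>B. b \<subseteq> X \<and> card b = 3"
    and cover: "\<And>x y. x \<in> X \<Longrightarrow> y \<in> X \<Longrightarrow> x \<noteq> y \<Longrightarrow> \<exists>b\<in>B. {x, y} \<subseteq> b"
    and count: "3 * card B \<le> card X choose 2"
    and p: "p \<subseteq> X" "card p = 2"
  shows "card {b\<in>B. p \<subseteq> b} = 1"
proof -
  let ?P = "{p. p \<subseteq> X \<and> card p = 2}"
  let ?c = "\<lambda>p. card {b\<in>B. p \<subseteq> b}"
  have finB: "finite B" using blocks finX by (intro finite_subset[of B "Pow X"]) auto
  have pos: "1 \<le> ?c q" if q: "q \<in> ?P" for q
  proof -
    obtain x y where xy: "q = {x, y}" "x \<noteq> y" using q by (auto simp: card_2_iff)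
    then have "x \<in> X" "y \<in> X" using q by auto
    then obtain b where "b \<in> B" "q \<subseteq> b" using cover xy by blast
    then have "{b\<in>B. q \<subseteq> b} \<noteq> {}" by blast
    then show ?thesis using finB by (simp add: Suc_le_eq card_gt_0_iff)
  qed
  show ?thesis
  proof (rule ccontr)
    assume "?c p \<noteq> 1"
    have "(\<Sum>q\<in>?P. 1) < (\<Sum>q\<in>?P. ?c q)"
    proof (rule sum_strict_mono_ex1)
      show "finite ?P" using finX by simp
      show "\<forall>q\<in>?P. 1 \<le> ?c q" using pos by blast
      have p_mem: "p \<in> ?P" using p by simp
      moreover have "1 < ?c p" using pos[OF p_mem] \<open>?c p \<noteq> 1\<close> by linarith
      ultimately show "\<exists>q\<in>?P. 1 < ?c q" by blast
    qed
    also have "\<dots> = 3 * card B" by (rule sum_card_blocks_containing_pairs[OF finX blocks])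
    also have "\<dots> \<le> (\<Sum>q\<in>?P. 1)" using count finX by (simp add: n_subsets)
    finally show False by simp
  qed
qed

lemma is_STS_if_covering:
  assumes finX: "finite X" and blocks: "\<forall>b\<in>B. b \<subseteq> X \<and> card b = 3"
    and cover: "\<And>x y. x \<in> X \<Longrightarrow> y \<in> X \<Longrightarrow> x \<noteq> y \<Longrightarrow> \<exists>b\<in>B. {x, y} \<subseteq> b"
    and count: "3 * card B \<le> card X choose 2"
  shows "is_STS X B"
proof -
  have "\<forall>x\<in>X. \<forall>y\<in>X. x \<noteq> y \<longrightarrow> (\<exists>!b. b \<in> B \<and> {x, y} \<subseteq> b)"
  proof (intro ballI impI)
    fix x y assume "x \<in> X" "y \<in> X" "x \<noteq> y"
    then have "card {b\<in>B. {x, y} \<subseteq> b} = 1"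
      by (intro card_blocks_containing_pair_eq_1[OF finX blocks cover count]) simp_all
    then obtain b where b: "{b\<in>B. {x, y} \<subseteq> b} = {b}" by (auto simp: card_1_singleton_iff)
    show "\<exists>!b. b \<in> B \<and> {x, y} \<subseteq> b"
    proof
      show "b \<in> B \<and> {x, y} \<subseteq> b" using b by blast
      show "c = b" if "c \<in> B \<and> {x, y} \<subseteq> c" for c using b that by blast
    qed
  qed
  then show ?thesis using finX blocks unfolding is_STS_def by (intro conjI)
qed

lemma inj_on_disjoint_if_card_Un_image:
  assumes "finite A" "finite L" "card (A \<union> f ` L) = card A + card L"
  shows "inj_on f L" "A \<inter> f ` L = {}"
proof -
  have "card (A \<union> f ` L) \<le> card A + card (f ` L)" by (rule card_Un_le)
  moreover have "card (f ` L) \<le> card L" by (rule card_image_le) fact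
  ultimately have "card (f ` L) = card L" "card (A \<union> f ` L) = card A + card (f ` L)"
    using assms(3) by linarith+
  then show "inj_on f L" "A \<inter> f ` L = {}"
    using assms(1,2) card_Un_Int[of A "f ` L"] by (auto intro: eq_card_imp_inj_on)
qed

lemma STS_bij_image:
  assumes h: "bij_betw h X Y" and sts: "STS v X B"
  shows "STS v Y (image h ` B)"
proof -
  have inj: "inj_on h X" and img: "h ` X = Y" using h by (auto simp: bij_betw_def)
  have old: "is_STS X B" and card_X: "card X = v" using sts unfolding STS_def by simp_all
  then have finX: "finite X" and blocks: "\<forall>b\<in>B. b \<subseteq> X \<and> card b = 3"
    unfolding is_STS_def by simp_all
  have card_Y: "card Y = v" using card_X img inj by (auto simp: card_image)
  have "is_STS Y (image h ` B)"
  proof (rule is_STS_if_covering)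
    show "finite Y" using finX img by blast
    show "\<forall>b'\<in>image h ` B. b' \<subseteq> Y \<and> card b' = 3"
      using blocks img inj by (auto simp: card_image inj_on_subset)
  next
    fix x' y' assume "x' \<in> Y" "y' \<in> Y" "x' \<noteq> y'"
    then obtain x y where "x \<in> X" "y \<in> X" "x \<noteq> y" "x' = h x" "y' = h y" using img by blast
    then obtain b where "b \<in> B" "{x, y} \<subseteq> b" using is_STS_cover[OF old] by blast
    then show "\<exists>b'\<in>image h ` B. {x', y'} \<subseteq> b'" using \<open>x' = h x\<close> \<open>y' = h y\<close> by blast
  next
    have "card (image h ` B) \<le> card B" using is_STS_finite_blocks[OF old] by (rule card_image_le)
    then show "3 * card (image h ` B) \<le> card Y choose 2"
      using STS_card_blocks[OF old] card_X card_Y by simp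
  qed
  then show ?thesis using card_Y unfolding STS_def by simp
qed

lemma zero_sum_flow_bij_image:
  assumes h: "bij_betw h X Y" and blocks: "\<forall>b\<in>B. b \<subseteq> X"
    and flow: "zero_sum_flow k X B f"
  shows "zero_sum_flow k Y (image h ` B) (\<lambda>b'. f (inv_into X h ` b'))"
proof -
  have inj: "inj_on h X" and img: "h ` X = Y"
    using h by (auto simp: bij_betw_def)
  have cancel: "inv_into X h ` h ` b = b" if "b \<in> B" for b
    using inj blocks that by simp
  have injB: "inj_on (image h) B"
    by (rule inj_on_inverseI[of _ "image (inv_into X h)"]) (use cancel in blast)
  have "(\<Sum>b'\<in>{b'\<in>image h ` B. h x \<in> b'}. f (inv_into X h ` b')) = 0" if x: "x \<in> X" for x
  proof -
    have "{b'\<in>image h ` B. h x \<in> b'} = image h ` {b\<in>B. x \<in> b}"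
      using inj_on_image_mem_iff[OF inj x] blocks by blast
    moreover have "inj_on (image h) {b\<in>B. x \<in> b}" using injB by (rule inj_on_subset) blast
    ultimately have "(\<Sum>b'\<in>{b'\<in>image h ` B. h x \<in> b'}. f (inv_into X h ` b'))
        = (\<Sum>b\<in>{b\<in>B. x \<in> b}. f b)"
      using cancel by (simp add: sum.reindex)
    also have "\<dots> = 0" using flow x unfolding zero_sum_flow_def by blast
    finally show ?thesis .
  qed
  then show ?thesis
    using flow img cancel unfolding zero_sum_flow_def by auto
qed

lemma STS_zero_sum_flow_on_lessThan:
  assumes sts: "STS v X B" and flow: "zero_sum_flow k X B f"
  shows "\<exists>(B0 :: nat set set) f0. STS v {..<v} B0 \<and> zero_sum_flow k {..<v} B0 f0"
proof -
  have "finite X" "card X = v" and blocks: "\<forall>b\<in>B. b \<subseteq> X"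
    using sts unfolding STS_def is_STS_def by simp_all
  then obtain h where h: "bij_betw h X {..<v}"
    using ex_bij_betw_finite_nat[of X] by (auto simp: atLeast0LessThan)
  show ?thesis
    using STS_bij_image[OF h sts] zero_sum_flow_bij_image[OF h blocks flow] by blast
qed

lemma sum_extension_Un_image:
  assumes "finite A" "finite L" "inj_on f L" "A \<inter> f ` L = {}"
  shows "(\<Sum>b\<in>{b \<in> A \<union> f ` L. P b}. if b \<in> A then g b else w (inv_into L f b))
    = (\<Sum>b\<in>{b\<in>A. P b}. g b) + (\<Sum>l\<in>{l\<in>L. P (f l)}. w l)"
    (is "(\<Sum>b\<in>_. ?h b) = _")
proof -
  let ?N = "{l\<in>L. P (f l)}"
  have "{b \<in> A \<union> f ` L. P b} = {b\<in>A. P b} \<union> f ` ?N" by auto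
  moreover have "(\<Sum>b\<in>{b\<in>A. P b} \<union> f ` ?N. ?h b) = (\<Sum>b\<in>{b\<in>A. P b}. ?h b) + (\<Sum>b\<in>f ` ?N. ?h b)"
  proof (rule sum.union_disjoint)
    show "finite {b\<in>A. P b}" "finite (f ` ?N)" using assms(1,2) by simp_all
    show "{b\<in>A. P b} \<inter> f ` ?N = {}" using assms(4) by blast
  qed
  moreover have "(\<Sum>b\<in>{b\<in>A. P b}. ?h b) = (\<Sum>b\<in>{b\<in>A. P b}. g b)" by simp
  moreover have "(\<Sum>b\<in>f ` ?N. ?h b) = (\<Sum>l\<in>?N. w l)"
  proof -
    have "inj_on f ?N" using assms(3) by (rule inj_on_subset) blast
    then have "(\<Sum>b\<in>f ` ?N. ?h b) = (\<Sum>l\<in>?N. ?h (f l))" by (simp add: sum.reindex)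
    also have "\<dots> = (\<Sum>l\<in>?N. w l)" using assms(3,4) by (intro sum.cong) auto
    finally show ?thesis .
  qed
  ultimately show ?thesis by simp
qed

lemma sum_neg_one_power_even_interval: "(\<Sum>i\<in>{m..<m + 2 * k}. (-1::int) ^ i) = 0"
proof (induction k)
  case (Suc k)
  have "{m..<m + 2 * Suc k} = insert (m + 2 * k + 1) (insert (m + 2 * k) {m..<m + 2 * k})" by auto
  then show ?case using Suc.IH by simp
qed simp

definition parity_sign :: "int \<Rightarrow> int" where
  "parity_sign z = (if even z then 1 else -1)"

lemma neg_one_power_eq_parity_sign: "(-1::int) ^ n = parity_sign (int n)"
  by (simp add: parity_sign_def)

lemma sum_lessThan_7:
  "(\<Sum>e<7::nat. f e) = f 0 + f 1 + f 2 + f 3 + f 4 + f 5 + (f 6 :: 'a::comm_monoid_add)"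
  by (simp add: eval_nat_numeral add.assoc)

lemma less_7_cases: "(e::nat) < 7 \<Longrightarrow> e = 0 \<or> e = 1 \<or> e = 2 \<or> e = 3 \<or> e = 4 \<or> e = 5 \<or> e = 6"
  by auto

lemma ex_less_7: "(\<exists>l<7. P l) \<longleftrightarrow> P 0 \<or> P 1 \<or> P 2 \<or> P 3 \<or> P 4 \<or> P 5 \<or> P (6::nat)"
proof
  assume "\<exists>l<7. P l"
  then obtain l where "l < 7" "P l" by blast
  with less_7_cases[of l] show "P 0 \<or> P 1 \<or> P 2 \<or> P 3 \<or> P 4 \<or> P 5 \<or> P 6" by auto
qed (elim disjE; force)

lemma sum_nested_delta:
  "finite A \<Longrightarrow> (\<Sum>x\<in>A. \<Sum>y\<in>T. if a = x then f x y else 0) = (if a \<in> A then \<Sum>y\<in>T. f a y else 0)"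
proof -
  have "(\<Sum>y\<in>T. if a = x then f x y else 0) = (if a = x then \<Sum>y\<in>T. f x y else 0)" for x by simp
  moreover assume "finite A"
  ultimately show ?thesis by (simp add: sum.delta)
qed

lemma sum_if_mem: "finite A \<Longrightarrow> S \<subseteq> A \<Longrightarrow> (\<Sum>x\<in>A. if x \<in> S then f x else 0) = sum f S"
  by (simp add: sum.inter_restrict[symmetric] Int_absorb1)

section \<open>A doubling construction for Steiner triple systems\<close>

(* Point x_j of the old system is j, point y_a of the copy of Z_v is v + a, and point s_e of
   the Fano plane is 2 v + e. *)
datatype block_label = XYY nat nat | XYS nat nat | YYY nat | SSS nat

locale sts_doubling =
  fixes v :: nat
  assumes odd_v: "odd v" and v_ge_7: "7 \<le> v"
begin

definition half :: nat where "half = v div 2"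

definition res :: "int \<Rightarrow> nat" where "res z = nat (z mod int v)"

lemma v_eq_half: "v = 2 * half + 1"
  using odd_v unfolding half_def by presburger

lemma int_res: "int (res z) = z mod int v"
  using v_ge_7 by (simp add: res_def)

lemma res_lt: "res z < v"
  using v_ge_7 by (simp add: res_def nat_less_iff)

lemma v_plus_neq_res [simp]: "v + n \<noteq> res z"
  using res_lt[of z] by linarith

lemma res_of_nat [simp]: "n < v \<Longrightarrow> res (int n) = n"
  by (simp add: res_def nat_mod_distrib)

lemma res_eq_iff: "res z = res w \<longleftrightarrow> z mod int v = w mod int v"
  by (metis int_res of_nat_eq_iff)

lemma res_cong: "z mod int v = w mod int v \<Longrightarrow> res z = res w"
  by (simp add: res_eq_iff)

lemma res_res_add [simp]: "res (int (res z) + w) = res (z + w)"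
  by (rule res_cong) (simp add: int_res mod_simps)

lemma res_res_add_diff [simp]: "res (int (res z) + w - c) = res (z + w - c)"
  by (rule res_cong) (metis int_res mod_add_left_eq mod_diff_left_eq)

lemma res_diff_res [simp]: "res (w - int (res z)) = res (w - z)"
  by (rule res_cong) (simp add: int_res mod_simps)

lemma res_eq_shift_iff:
  assumes "j < v" "a < v"
  shows "a = res (int j + c) \<longleftrightarrow> j = res (int a - c)"
proof -
  have "a = res (int j + c) \<longleftrightarrow> res (int a) = res (int j + c)" using assms by simp
  also have "\<dots> \<longleftrightarrow> res (int j) = res (int a - c)"
    unfolding res_eq_iff by (auto simp: mod_eq_dvd_iff dvd_diff_commute algebra_simps)
  finally show ?thesis using assms by simp
qed

lemma res_eq_diff_iff:
  assumes "j < v" "a < v"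
  shows "a = res (int j - c) \<longleftrightarrow> j = res (int a + c)"
  using res_eq_shift_iff[OF assms, of "- c"] by simp

lemma res_neq:
  assumes "0 < w - z" "w - z < int v"
  shows "res z \<noteq> res w"
proof
  assume "res z = res w"
  then have "int v dvd w - z" by (simp add: res_eq_iff mod_eq_dvd_iff dvd_diff_commute)
  then show False using assms zdvd_imp_le by fastforce
qed

lemma res_near:
  assumes "a < v"
  shows "\<exists>t\<le>half. a = res (z + int t) \<or> a = res (z - int t)"
proof -
  define d where "d = res (int a - z)"
  have a_eq: "a = res (z + int d)"
  proof -
    have "res (z + int d) = res (int a)"
      unfolding d_def by (rule res_cong) (simp add: int_res mod_simps)
    then show ?thesis using assms by simp
  qed
  show ?thesis
  proof (cases "d \<le> half")
    case True
    then show ?thesis using a_eq by blast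
  next
    case False
    have "d < v" unfolding d_def by (rule res_lt)
    then have "a = res (z - int (v - d))"
      unfolding a_eq using minus_mod_self2[of "z + int d" "int v"]
      by (intro res_cong) (simp add: of_nat_diff algebra_simps)
    moreover have "v - d \<le> half" using False v_eq_half by linarith
    ultimately show ?thesis by blast
  qed
qed

lemma res_window:
  assumes "- int v \<le> z" "z < 2 * int v"
  shows "int (res z) = (if z < 0 then z + int v else if z < int v then z else z - int v)"
proof -
  have "z mod int v = z + int v" if "z < 0"
  proof -
    have "z mod int v = (z + int v) mod int v" by simp
    also have "\<dots> = z + int v" using assms that by (intro mod_pos_pos_trivial) auto
    finally show ?thesis .
  qed
  moreover have "z mod int v = z - int v" if "int v \<le> z"
  proof -
    have "z mod int v = (z - int v) mod int v" by simp
    also have "\<dots> = z - int v" using assms that by (intro mod_pos_pos_trivial) auto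
    finally show ?thesis .
  qed
  ultimately show ?thesis by (simp add: int_res)
qed

lemma parity_sign_res_window:
  assumes "- int v \<le> z" "z < 2 * int v"
  shows "parity_sign (int (res z)) = (if 0 \<le> z \<and> z < int v then parity_sign z else - parity_sign z)"
  using res_window[OF assms] odd_v by (auto simp: parity_sign_def)

lemma res_eq_window:
  assumes "- int v \<le> z" "z < 2 * int v" "0 < c" "c \<le> v"
  shows "res z = v - c \<longleftrightarrow> z = int v - int c \<or> z = - int c \<or> z = 2 * int v - int c"
proof -
  have "res z = v - c \<longleftrightarrow> int (res z) = int v - int c" using assms(4) by linarith
  also have "\<dots> \<longleftrightarrow> z = int v - int c \<or> z = - int c \<or> z = 2 * int v - int c"
    unfolding res_window[OF assms(1,2)] using assms by auto
  finally show ?thesis .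
qed

fun block :: "block_label \<Rightarrow> nat set" where
  "block (XYY j t) = {j, v + res (int j - int t), v + res (int j + int t)}"
| "block (XYS j e) = {j, v + res (int j + int e - 3), 2 * v + e}"
| "block (YYY i) = {v + i, v + res (int i + 2), v + res (int i + 6)}"
| "block (SSS e) = {2 * v + e, 2 * v + (e + 1) mod 7, 2 * v + (e + 3) mod 7}"

definition labels :: "block_label set" where
  "labels = case_prod XYY ` ({..<v} \<times> {4..half}) \<union> case_prod XYS ` ({..<v} \<times> {..<7})
     \<union> YYY ` {..<v} \<union> SSS ` {..<7}"

lemma block_subset: "l \<in> labels \<Longrightarrow> block l \<subseteq> {..<2 * v + 7}"
proof (unfold labels_def, elim UnE imageE; clarify)
  fix j t x assume "j < v" "x \<in> block (XYY j t)"
  then show "x < 2 * v + 7" using res_lt[of "int j - int t"] res_lt[of "int j + int t"] by auto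
next
  fix j e x assume "j < v" "e < (7::nat)" "x \<in> block (XYS j e)"
  then show "x < 2 * v + 7" using res_lt[of "int j + int e - 3"] by auto
next
  fix i x assume "i < v" "x \<in> block (YYY i)"
  then show "x < 2 * v + 7" using res_lt[of "int i + 2"] res_lt[of "int i + 6"] by auto
next
  fix e x assume "e < (7::nat)" "x \<in> block (SSS e)"
  then show "x < 2 * v + 7" by auto
qed

lemma card_block: "l \<in> labels \<Longrightarrow> card (block l) = 3"
proof (unfold labels_def, elim UnE imageE; clarify)
  fix j t assume "j < v" "t \<in> {4..half}"
  then have "res (int j - int t) \<noteq> res (int j + int t)" using v_eq_half by (intro res_neq) auto
  then show "card (block (XYY j t)) = 3" using res_lt \<open>j < v\<close> by (auto simp: card_insert_if)
next
  fix j e assume "j < v" "e < (7::nat)"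
  then show "card (block (XYS j e)) = 3"
    using res_lt[of "int j + int e - 3"] by (auto simp: card_insert_if)
next
  fix i assume "i < v"
  have "res (int i) \<noteq> res (int i + 2)" "res (int i) \<noteq> res (int i + 6)"
    "res (int i + 2) \<noteq> res (int i + 6)" by (rule res_neq; use v_ge_7 in simp)+
  then show "card (block (YYY i)) = 3" using \<open>i < v\<close> by (auto simp: card_insert_if)
next
  fix e :: nat assume "e < 7"
  then show "card (block (SSS e)) = 3" by (elim less_7_cases[elim_format] disjE) simp_all
qed

lemma finite_labels: "finite labels"
  by (simp add: labels_def)

lemma labels_XYY: "j < v \<Longrightarrow> 4 \<le> t \<Longrightarrow> t \<le> half \<Longrightarrow> XYY j t \<in> labels"
  unfolding labels_def by force

lemma labels_XYS: "j < v \<Longrightarrow> e < 7 \<Longrightarrow> XYS j e \<in> labels"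
  unfolding labels_def by force

lemma labels_YYY: "i < v \<Longrightarrow> YYY i \<in> labels"
  unfolding labels_def by force

lemma labels_SSS: "e < 7 \<Longrightarrow> SSS e \<in> labels"
  unfolding labels_def by force

lemma cover_XY:
  assumes j: "j < v" and a: "a < v"
  shows "\<exists>l\<in>labels. {j, v + a} \<subseteq> block l"
proof -
  obtain t where t: "t \<le> half" and "a = res (int j + int t) \<or> a = res (int j - int t)"
    using res_near[OF a] by blast
  then consider (plus) "a = res (int j + int t)" | (minus) "a = res (int j - int t)" by blast
  then show ?thesis
  proof cases
    case plus
    show ?thesis
    proof (cases "t \<le> 3")
      case True
      then have "{j, v + a} \<subseteq> block (XYS j (3 + t))" using plus by simp
      then show ?thesis by (rule bexI) (use labels_XYS[OF j] True in simp)
    next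
      case False
      then show ?thesis using plus labels_XYY[OF j _ t] by force
    qed
  next
    case minus
    show ?thesis
    proof (cases "t \<le> 3")
      case True
      then have "{j, v + a} \<subseteq> block (XYS j (3 - t))" using minus by (simp add: of_nat_diff)
      then show ?thesis by (rule bexI) (use labels_XYS[OF j] in simp)
    next
      case False
      then show ?thesis using minus labels_XYY[OF j _ t] by force
    qed
  qed
qed

lemma cover_XS: "j < v \<Longrightarrow> e < 7 \<Longrightarrow> \<exists>l\<in>labels. {j, 2 * v + e} \<subseteq> block l"
  using labels_XYS by force

lemma cover_YS:
  assumes a: "a < v" and e: "e < 7"
  shows "\<exists>l\<in>labels. {v + a, 2 * v + e} \<subseteq> block l"
proof -
  define j where "j = res (int a + 3 - int e)"
  have "res (int j + int e - 3) = res (int a)" by (simp add: j_def)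
  then have "{v + a, 2 * v + e} \<subseteq> block (XYS j e)" using a by simp
  moreover have "j < v" unfolding j_def by (rule res_lt)
  ultimately show ?thesis using labels_XYS[OF _ e] by blast
qed

lemma cover_symmetric_pair:
  assumes m: "m < v" and t: "0 < t" "t \<le> half"
  shows "\<exists>l\<in>labels. {v + res (int m - int t), v + res (int m + int t)} \<subseteq> block l"
proof -
  let ?pair = "{v + res (int m - int t), v + res (int m + int t)}"
  consider "t = 1" | "t = 2" | "t = 3" | "4 \<le> t" using t by linarith
  then show ?thesis
  proof cases
    case 1
    then have "?pair \<subseteq> block (YYY (res (int m - 1)))" by (simp; simp add: ac_simps)
    then show ?thesis by (rule bexI) (rule labels_YYY[OF res_lt])
  next
    case 2
    then have "?pair \<subseteq> block (YYY (res (int m - 4)))" by (simp; simp add: ac_simps)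
    then show ?thesis by (rule bexI) (rule labels_YYY[OF res_lt])
  next
    case 3
    then have "?pair \<subseteq> block (YYY (res (int m - 3)))" by (simp; simp add: ac_simps)
    then show ?thesis by (rule bexI) (rule labels_YYY[OF res_lt])
  next
    case 4
    have "?pair \<subseteq> block (XYY m t)" by simp
    then show ?thesis by (rule bexI) (rule labels_XYY[OF m 4 t(2)])
  qed
qed

lemma cover_YY:
  assumes a: "a < v" and b: "b < v" and ab: "a \<noteq> b"
  shows "\<exists>l\<in>labels. {v + a, v + b} \<subseteq> block l"
proof -
  \<comment> \<open>the midpoint of a and b: 2 m = a + b (mod v), as 2 (half + 1) = v + 1\<close>
  define m where "m = res ((int a + int b) * int (half + 1))"
  have m: "m < v" unfolding m_def by (rule res_lt)
  have a_eq: "a = res (2 * int m - int b)"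
  proof -
    define x where "x = (int a + int b) * int (half + 1)"
    have "int m = x - int v * (x div int v)"
      unfolding m_def x_def[symmetric] int_res by (simp add: minus_div_mult_eq_mod[symmetric])
    moreover have "2 * x = (int a + int b) * (int v + 1)"
      unfolding x_def by (subst v_eq_half) (simp add: algebra_simps)
    ultimately have "int a - (2 * int m - int b) = int v * (2 * (x div int v) - (int a + int b))"
      by algebra
    then have "res (int a) = res (2 * int m - int b)"
      by (simp add: res_eq_iff mod_eq_dvd_iff)
    then show ?thesis using a by simp
  qed
  obtain t where t: "t \<le> half" and "b = res (int m + int t) \<or> b = res (int m - int t)"
    using res_near[OF b] by blast
  then have ab_eq: "{a, b} = {res (int m - int t), res (int m + int t)}"
    using a_eq by (auto simp: algebra_simps)
  moreover have "0 < t" using ab ab_eq by (cases "t = 0") auto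
  moreover have "{v + a, v + b} = (+) v ` {a, b}" by simp
  ultimately show ?thesis using cover_symmetric_pair[OF m _ t] by simp
qed

lemma cover_SS:
  assumes e: "e < 7" and e': "e' < 7" and ee': "e \<noteq> e'"
  shows "\<exists>l\<in>labels. {2 * v + e, 2 * v + e'} \<subseteq> block l"
proof -
  have "\<exists>l<7. e \<in> {l, (l + 1) mod 7, (l + 3) mod 7} \<and> e' \<in> {l, (l + 1) mod 7, (l + 3) mod 7}"
    using e e' ee' by (elim less_7_cases[elim_format] disjE) (simp_all add: ex_less_7)
  then obtain l where "l < 7" "{2 * v + e, 2 * v + e'} \<subseteq> block (SSS l)" by auto
  then show ?thesis using labels_SSS by blast
qed

lemma cover_new_pair:
  assumes x: "x < 2 * v + 7" and y: "y < 2 * v + 7" and xy: "x \<noteq> y" and new: "v \<le> x \<or> v \<le> y"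
  shows "\<exists>l\<in>labels. {x, y} \<subseteq> block l"
proof -
  have sym: "\<exists>l\<in>labels. {x, y} \<subseteq> block l" if "x < y" "y < 2 * v + 7" "v \<le> y" for x y
  proof -
    consider "x < v" "y < 2 * v" | "x < v" "2 * v \<le> y" | "v \<le> x" "y < 2 * v"
      | "v \<le> x" "x < 2 * v" "2 * v \<le> y" | "2 * v \<le> x" using that by linarith
    then show ?thesis
    proof cases
      case 1
      then show ?thesis using cover_XY[of x "y - v"] that by simp
    next
      case 2
      then show ?thesis using cover_XS[of x "y - 2 * v"] that by simp
    next
      case 3
      then show ?thesis using cover_YY[of "x - v" "y - v"] that by simp
    next
      case 4
      then show ?thesis using cover_YS[of "x - v" "y - 2 * v"] that by simp
    next
      case 5
      then show ?thesis using cover_SS[of "x - 2 * v" "y - 2 * v"] that by simp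
    qed
  qed
  show ?thesis
  proof (cases "x < y")
    case True
    with new have "v \<le> y" by linarith
    with True y show ?thesis by (rule sym)
  next
    case False
    with xy new have "y < x" "v \<le> x" by linarith+
    from \<open>y < x\<close> x \<open>v \<le> x\<close> have "\<exists>l\<in>labels. {y, x} \<subseteq> block l" by (rule sym)
    then show ?thesis by (simp add: insert_commute)
  qed
qed

lemma card_labels: "card labels = v * (half - 3) + 8 * v + 7"
proof -
  have "card labels = card (case_prod XYY ` ({..<v} \<times> {4..half}))
      + card (case_prod XYS ` ({..<v} \<times> {..<7})) + card (YYY ` {..<v}) + card (SSS ` {..<7})"
    unfolding labels_def by (subst card_Un_disjoint; auto)+
  also have "\<dots> = v * (half - 3) + v * 7 + v + 7"
    by (subst card_image; simp add: inj_on_def)+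
  finally show ?thesis by simp
qed

lemma pair_count_doubling: "(v choose 2) + 3 * card labels = (2 * v + 7) choose 2"
proof -
  obtain h where h: "half = h + 3" using v_ge_7 v_eq_half by (intro that[of "half - 3"]) linarith
  then have v: "v = 2 * h + 7" using v_eq_half by simp
  have "v * (v - 1) = 2 * (v * (h + 3))"
    "(2 * v + 7) * (2 * v + 7 - 1) = 2 * ((2 * v + 7) * (v + 3))"
    using v by (simp_all add: algebra_simps)
  then have "v choose 2 = v * (h + 3)" "(2 * v + 7) choose 2 = (2 * v + 7) * (v + 3)"
    by (simp_all only: choose_two)
  then show ?thesis unfolding card_labels h using v by (simp add: algebra_simps)
qed

lemma STS_doubling:
  assumes old: "STS v {..<v} B0"
  shows "STS (2 * v + 7) {..<2 * v + 7} (B0 \<union> block ` labels)"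
proof -
  have old_sts: "is_STS {..<v} B0" using old unfolding STS_def by simp
  then have old_blocks: "\<forall>b\<in>B0. b \<subseteq> {..<v} \<and> card b = 3" unfolding is_STS_def by simp
  have "is_STS {..<2 * v + 7} (B0 \<union> block ` labels)"
  proof (rule is_STS_if_covering)
    show "\<forall>b\<in>B0 \<union> block ` labels. b \<subseteq> {..<2 * v + 7} \<and> card b = 3"
      using old_blocks block_subset card_block by fastforce
  next
    fix x y assume x: "x \<in> {..<2 * v + 7}" and y: "y \<in> {..<2 * v + 7}" and xy: "x \<noteq> y"
    show "\<exists>b\<in>B0 \<union> block ` labels. {x, y} \<subseteq> b"
    proof (cases "x < v \<and> y < v")
      case True
      then have "\<exists>b\<in>B0. {x, y} \<subseteq> b" using is_STS_cover[OF old_sts] xy by simp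
      then show ?thesis by blast
    next
      case False
      then have "v \<le> x \<or> v \<le> y" by linarith
      with x y xy have "\<exists>l\<in>labels. {x, y} \<subseteq> block l" by (intro cover_new_pair) simp_all
      then show ?thesis by blast
    qed
  next
    have "card (B0 \<union> block ` labels) \<le> card B0 + card labels"
      using card_Un_le[of B0 "block ` labels"] card_image_le[of labels block]
      by (simp add: labels_def)
    moreover have "3 * card B0 = v choose 2" using STS_card_blocks[OF old_sts] by simp
    ultimately show "3 * card (B0 \<union> block ` labels) \<le> card {..<2 * v + 7} choose 2"
      using pair_count_doubling by simp
  qed simp
  then show ?thesis unfolding STS_def by simp
qed

(* Both B0 \<union> block ` labels and the disjoint union of B0 and labels have C(2v+7, 2)/3
   elements, so no block is listed twice. *)
lemma new_blocks_distinct: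
  assumes old: "STS v {..<v} B0"
  shows "inj_on block labels" "B0 \<inter> block ` labels = {}"
proof -
  have "is_STS {..<v} B0" "is_STS {..<2 * v + 7} (B0 \<union> block ` labels)"
    using old STS_doubling[OF old] unfolding STS_def by simp_all
  then have "3 * card B0 = v choose 2" "3 * card (B0 \<union> block ` labels) = (2 * v + 7) choose 2"
    by (simp_all add: STS_card_blocks)
  then have card_eq: "card (B0 \<union> block ` labels) = card B0 + card labels"
    using pair_count_doubling by simp
  have "finite B0" using old unfolding STS_def by (simp add: is_STS_finite_blocks)
  then show "inj_on block labels" "B0 \<inter> block ` labels = {}"
    using finite_labels card_eq by (rule inj_on_disjoint_if_card_Un_image)+
qed

lemma sum_labels:
  "(\<Sum>l\<in>labels. F l) = (\<Sum>j<v. \<Sum>t\<in>{4..half}. F (XYY j t)) + (\<Sum>j<v. \<Sum>e<7. F (XYS j e))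
     + (\<Sum>i<v. F (YYY i)) + (\<Sum>e<7. F (SSS e))"
proof -
  have "(\<Sum>l\<in>labels. F l) = (\<Sum>l\<in>case_prod XYY ` ({..<v} \<times> {4..half}). F l)
      + (\<Sum>l\<in>case_prod XYS ` ({..<v} \<times> {..<7}). F l)
      + (\<Sum>l\<in>YYY ` {..<v}. F l) + (\<Sum>l\<in>SSS ` {..<7}. F l)"
    unfolding labels_def by (subst sum.union_disjoint; auto)+
  also have "\<dots> = (\<Sum>j<v. \<Sum>t\<in>{4..half}. F (XYY j t)) + (\<Sum>j<v. \<Sum>e<7. F (XYS j e))
      + (\<Sum>i<v. F (YYY i)) + (\<Sum>e<7. F (SSS e))"
    by (subst sum.reindex; simp add: inj_on_def sum.cartesian_product case_prod_unfold)+
  finally show ?thesis .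
qed

lemma Y_point_in_block_iff:
  assumes j: "j < v" and a: "a < v"
  shows "v + a \<in> block (XYY j t) \<longleftrightarrow> j \<in> {res (int a + int t), res (int a - int t)}"
    and "v + a \<in> block (XYS j e) \<longleftrightarrow> j = res (int a + 3 - int e)"
    and "v + a \<in> block (YYY j) \<longleftrightarrow> j \<in> {a, res (int a - 2), res (int a - 6)}"
proof -
  show "v + a \<in> block (XYY j t) \<longleftrightarrow> j \<in> {res (int a + int t), res (int a - int t)}"
    using j res_eq_diff_iff[OF j a] res_eq_shift_iff[OF j a] by auto
  have "v + a \<in> block (XYS j e) \<longleftrightarrow> a = res (int j + int e - 3)" using j a by auto
  also have "\<dots> \<longleftrightarrow> j = res (int a + 3 - int e)"
    using res_eq_shift_iff[OF j a, of "int e - 3"] by (simp add: diff_diff_eq2 add_diff_eq)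
  finally show "v + a \<in> block (XYS j e) \<longleftrightarrow> j = res (int a + 3 - int e)" .
  show "v + a \<in> block (YYY j) \<longleftrightarrow> j \<in> {a, res (int a - 2), res (int a - 6)}"
    using res_eq_shift_iff[OF j a] by auto
qed

lemma sum_XYY_containing_Y:
  assumes a: "a < v" and t: "0 < t" "t \<le> half"
  shows "(\<Sum>j<v. if v + a \<in> block (XYY j t) then F j else 0)
    = F (res (int a + int t)) + F (res (int a - int t))"
proof -
  have "res (int a - int t) \<noteq> res (int a + int t)"
    by (rule res_neq) (use t v_eq_half in auto)
  have "(\<Sum>j<v. if v + a \<in> block (XYY j t) then F j else 0)
      = (\<Sum>j<v. if j \<in> {res (int a + int t), res (int a - int t)} then F j else 0)"
    by (intro sum.cong refl) (simp only: Y_point_in_block_iff(1)[OF _ a] lessThan_iff)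
  also have "\<dots> = sum F {res (int a + int t), res (int a - int t)}"
    by (rule sum_if_mem) (auto simp: res_lt)
  finally show ?thesis using \<open>res (int a - int t) \<noteq> res (int a + int t)\<close> by simp
qed

lemma sum_XYS_containing_Y:
  assumes a: "a < v"
  shows "(\<Sum>j<v. if v + a \<in> block (XYS j e) then F j else 0) = F (res (int a + 3 - int e))"
proof -
  have "(\<Sum>j<v. if v + a \<in> block (XYS j e) then F j else 0)
      = (\<Sum>j<v. if j = res (int a + 3 - int e) then F j else 0)"
    by (intro sum.cong refl) (simp only: Y_point_in_block_iff(2)[OF _ a] lessThan_iff)
  then show ?thesis by (simp add: sum.delta res_lt)
qed

lemma sum_YYY_containing_Y:
  assumes a: "a < v"
  shows "(\<Sum>i<v. if v + a \<in> block (YYY i) then F i else 0)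
    = F a + F (res (int a - 2)) + F (res (int a - 6))"
proof -
  have "res (int a - 2) \<noteq> res (int a)" "res (int a - 6) \<noteq> res (int a)"
    "res (int a - 6) \<noteq> res (int a - 2)" by (rule res_neq; use v_ge_7 in simp)+
  then have distinct: "a \<noteq> res (int a - 2)" "a \<noteq> res (int a - 6)"
    "res (int a - 2) \<noteq> res (int a - 6)" using a by auto
  have "(\<Sum>i<v. if v + a \<in> block (YYY i) then F i else 0)
      = (\<Sum>i<v. if i \<in> {a, res (int a - 2), res (int a - 6)} then F i else 0)"
    by (intro sum.cong refl) (simp only: Y_point_in_block_iff(3)[OF _ a] lessThan_iff)
  also have "\<dots> = sum F {a, res (int a - 2), res (int a - 6)}"
    by (rule sum_if_mem) (auto simp: res_lt a)
  finally show ?thesis using distinct by (simp add: add.assoc)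
qed

end

section \<open>Zero-sum flows on the doubled system\<close>

locale flow_doubling = sts_doubling +
  assumes v_mod_4: "v mod 4 = 1" and v_ge_13: "13 \<le> v"
begin

(* (-1)^j does not alternate from j = v - 1 to j = 0; the flips at j = v - 3, v - 2, v - 1
   cancel within each row and repair the sums at the points y_a near the wrap-around. *)
fun weight :: "block_label \<Rightarrow> int" where
  "weight (XYY j t) = (if t \<le> 6 then (-1) ^ j else (-1) ^ t) *
     (if (j, t) \<in> {(v - 2, 4), (v - 1, 5)} then -1 else 1)"
| "weight (XYS j e) = (if e \<in> {0, 3} then 1 else -1) * (-1) ^ j *
     (if (j, e) \<in> {(v - 3, 0), (v - 3, 4), (v - 2, 1), (v - 1, 5)} then -1 else 1)"
| "weight (YYY i) = - ((-1) ^ i)"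
| "weight (SSS e) = (if e \<in> {2, 3, 4} then -1 else 1)"

lemma abs_weight: "\<bar>weight l\<bar> = 1"
  by (cases l) (simp_all add: abs_mult power_abs)

lemma half_eq_6_plus_even: "half = 6 + 2 * ((half - 6) div 2)"
  using v_mod_4 v_ge_13 v_eq_half by presburger

definition window_sum :: "nat \<Rightarrow> int" where
  "window_sum a =
     (\<Sum>t\<in>{4, 5, 6}. weight (XYY (res (int a + int t)) t) + weight (XYY (res (int a - int t)) t))
   + (\<Sum>e<7. weight (XYS (res (int a + 3 - int e)) e))
   + weight (YYY a) + weight (YYY (res (int a - 2))) + weight (YYY (res (int a - 6)))"

lemma window_sum_zero:
  assumes "a < v"
  shows "window_sum a = 0"
proof -
  \<comment> \<open>Only the residues of a - 6, ..., a + 6 occur. Once a is pinned down near 0, or v - a near 0,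
    or both are at least 6 away, simp decides every reduction mod v and every flip condition.\<close>
  note window_simps = window_sum_def sum_lessThan_7 neg_one_power_eq_parity_sign
    parity_sign_res_window res_eq_window
  consider "a < 6" | "6 \<le> a" "a + 10 \<le> v" | "6 \<le> a" "v \<le> a + 9" by linarith
  then show ?thesis
  proof cases
    case 1
    then have "a = 0 \<or> a = 1 \<or> a = 2 \<or> a = 3 \<or> a = 4 \<or> a = 5" by auto
    then show ?thesis using v_ge_13 odd_v
      by (elim disjE) (simp_all add: window_simps, simp_all add: parity_sign_def)
  next
    case 2
    then show ?thesis using odd_v by (simp add: window_simps) (simp add: parity_sign_def)
  next
    case 3
    obtain d where d: "int a = int v - int d" "1 \<le> d" "d \<le> 9"
      using 3 assms by (intro that[of "v - a"]) auto
    then have "d = 1 \<or> d = 2 \<or> d = 3 \<or> d = 4 \<or> d = 5 \<or> d = 6 \<or> d = 7 \<or> d = 8 \<or> d = 9" by auto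
    then show ?thesis using 3 assms v_ge_13 odd_v d(1)
      by (elim disjE) (simp_all add: window_simps, simp_all add: parity_sign_def)
  qed
qed

definition point_weight :: "nat \<Rightarrow> int" where
  "point_weight p = (\<Sum>l\<in>labels. if p \<in> block l then weight l else 0)"

lemma point_weight_X:
  assumes j: "j < v"
  shows "point_weight j = (\<Sum>t\<in>{4..half}. weight (XYY j t)) + (\<Sum>e<7. weight (XYS j e))"
proof -
  have "point_weight j = (\<Sum>j'<v. \<Sum>t\<in>{4..half}. if j = j' then weight (XYY j' t) else 0)
      + (\<Sum>j'<v. \<Sum>e<7. if j = j' then weight (XYS j' e) else 0)"
    unfolding point_weight_def sum_labels using j by (auto intro!: sum.cong)
  also have "\<dots> = (\<Sum>t\<in>{4..half}. weight (XYY j t)) + (\<Sum>e<7. weight (XYS j e))"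
    using j by (simp only: sum_nested_delta finite_lessThan lessThan_iff if_True)
  finally show ?thesis .
qed

lemma point_weight_Y:
  assumes a: "a < v"
  shows "point_weight (v + a) =
      (\<Sum>t\<in>{4..half}. weight (XYY (res (int a + int t)) t) + weight (XYY (res (int a - int t)) t))
    + (\<Sum>e<7. weight (XYS (res (int a + 3 - int e)) e))
    + weight (YYY a) + weight (YYY (res (int a - 2))) + weight (YYY (res (int a - 6)))"
proof -
  have "(\<Sum>j<v. \<Sum>t\<in>{4..half}. if v + a \<in> block (XYY j t) then weight (XYY j t) else 0)
      = (\<Sum>t\<in>{4..half}. weight (XYY (res (int a + int t)) t) + weight (XYY (res (int a - int t)) t))"
    by (subst sum.swap) (intro sum.cong refl sum_XYY_containing_Y[OF a]; simp)
  moreover have "(\<Sum>j<v. \<Sum>e<7. if v + a \<in> block (XYS j e) then weight (XYS j e) else 0)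
      = (\<Sum>e<7. weight (XYS (res (int a + 3 - int e)) e))"
    by (subst sum.swap) (intro sum.cong refl sum_XYS_containing_Y[OF a])
  moreover have "(\<Sum>e<7. if v + a \<in> block (SSS e) then weight (SSS e) else 0) = 0"
    using a by simp
  ultimately show ?thesis
    unfolding point_weight_def sum_labels sum_YYY_containing_Y[OF a] by simp
qed

lemma point_weight_S:
  assumes e: "e < 7"
  shows "point_weight (2 * v + e) = (\<Sum>j<v. weight (XYS j e))
    + (\<Sum>l<7. if e \<in> {l, (l + 1) mod 7, (l + 3) mod 7} then weight (SSS l) else 0)"
proof -
  have "point_weight (2 * v + e) = (\<Sum>j<v. \<Sum>e'<7. if e = e' then weight (XYS j e') else 0)
      + (\<Sum>l<7. if e \<in> {l, (l + 1) mod 7, (l + 3) mod 7} then weight (SSS l) else 0)"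
    unfolding point_weight_def sum_labels using e by (simp del: weight.simps)
  then show ?thesis using e by (simp add: sum.delta del: weight.simps)
qed

lemma sum_4_to_half_split: "(\<Sum>t\<in>{4..half}. f t) = f 4 + f 5 + f 6 + (\<Sum>t\<in>{7..half}. f t :: int)"
proof -
  have "{4..half} = insert 4 (insert 5 (insert 6 {7..half}))" using half_eq_6_plus_even by auto
  then show ?thesis by (simp add: add.assoc)
qed

lemma sum_XYY_tail: "(\<Sum>t\<in>{7..half}. weight (XYY (J t) t)) = 0"
proof -
  have "{7..half} = {7..<7 + 2 * ((half - 6) div 2)}" using half_eq_6_plus_even by auto
  then show ?thesis using sum_neg_one_power_even_interval[of 7] by simp
qed

lemma point_weight_X_zero:
  assumes "j < v"
  shows "point_weight j = 0"
proof -
  have "j = v - 3 \<or> j = v - 2 \<or> j = v - 1 \<or> j + 3 < v" using assms by linarith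
  then show ?thesis
    unfolding point_weight_X[OF assms] sum_4_to_half_split sum_XYY_tail sum_lessThan_7
    using v_ge_13 by (elim disjE) auto
qed

lemma point_weight_Y_zero:
  assumes a: "a < v"
  shows "point_weight (v + a) = 0"
proof -
  have "point_weight (v + a) = window_sum a
      + ((\<Sum>t\<in>{7..half}. weight (XYY (res (int a + int t)) t))
        + (\<Sum>t\<in>{7..half}. weight (XYY (res (int a - int t)) t)))"
    unfolding point_weight_Y[OF a] window_sum_def sum_4_to_half_split sum.distrib
    by (simp del: weight.simps add: ac_simps)
  then show ?thesis using window_sum_zero[OF a] by (simp only: sum_XYY_tail add_0_right)
qed

lemma point_weight_S_zero:
  assumes e: "e < 7"
  shows "point_weight (2 * v + e) = 0"
proof -
  let ?low = "{0..<0 + 2 * (half - 1)}"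
  have tail_distinct: "v - 3 \<noteq> v - 2" "v - 3 \<noteq> v - 1" "v - 2 \<noteq> v - 1" using v_ge_13 by linarith+
  have split: "{..<v} = ?low \<union> {v - 3, v - 2, v - 1}" using v_eq_half v_ge_13 by auto
  have "(\<Sum>j\<in>?low. weight (XYS j e)) = (if e \<in> {0, 3} then 1 else -1) * (\<Sum>j\<in>?low. (-1) ^ j)"
    unfolding sum_distrib_left using v_eq_half by (intro sum.cong) auto
  then have "(\<Sum>j\<in>?low. weight (XYS j e)) = 0" by (simp only: sum_neg_one_power_even_interval)
  moreover have "(\<Sum>j\<in>{v - 3, v - 2, v - 1}. weight (XYS j e))
      = weight (XYS (v - 3) e) + weight (XYS (v - 2) e) + weight (XYS (v - 1) e)"
    using tail_distinct by (simp del: weight.simps add: add.assoc)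
  ultimately have "(\<Sum>j<v. weight (XYS j e))
      = weight (XYS (v - 3) e) + weight (XYS (v - 2) e) + weight (XYS (v - 1) e)"
    unfolding split using v_eq_half by (subst sum.union_disjoint) auto
  moreover have "v - 3 = 2 * (half - 1)" "v - 2 = 2 * (half - 1) + 1" "v - 1 = 2 * half"
    using v_eq_half v_ge_13 by linarith+
  then have "(-1::int) ^ (v - 3) = 1" "(-1::int) ^ (v - 2) = -1" "(-1::int) ^ (v - 1) = 1"
    by simp_all
  ultimately show ?thesis
    unfolding point_weight_S[OF e] using e tail_distinct
    by (elim less_7_cases[elim_format] disjE) (simp_all add: sum_lessThan_7)
qed

lemma point_weight_zero:
  assumes "p < 2 * v + 7"
  shows "point_weight p = 0"
proof -
  consider "p < v" | "v \<le> p" "p < 2 * v" | "2 * v \<le> p" by linarith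
  then show ?thesis
  proof cases
    case 1
    then show ?thesis by (rule point_weight_X_zero)
  next
    case 2
    then show ?thesis using point_weight_Y_zero[of "p - v"] by simp
  next
    case 3
    then show ?thesis using point_weight_S_zero[of "p - 2 * v"] assms by simp
  qed
qed

lemma zero_sum_flow_doubling:
  assumes old: "STS v {..<v} B0" and flow: "zero_sum_flow k {..<v} B0 f0"
  shows "zero_sum_flow k {..<2 * v + 7} (B0 \<union> block ` labels)
    (\<lambda>b. if b \<in> B0 then f0 b else weight (inv_into labels block b))"
    (is "zero_sum_flow k _ _ ?g")
proof -
  have inj: "inj_on block labels" and disj: "B0 \<inter> block ` labels = {}"
    using new_blocks_distinct[OF old] by simp_all
  have B0_sub: "\<forall>b\<in>B0. b \<subseteq> {..<v}" using old unfolding STS_def is_STS_def by simp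
  have finB0: "finite B0" using old unfolding STS_def by (simp add: is_STS_finite_blocks)
  have bounded: "?g b \<noteq> 0 \<and> \<bar>?g b\<bar> \<le> int k - 1" if b: "b \<in> B0 \<union> block ` labels" for b
  proof (cases "b \<in> B0")
    case True
    then show ?thesis using flow unfolding zero_sum_flow_def by simp
  next
    case False
    then obtain l where "l \<in> labels" "b = block l" using b by blast
    then have "?g b = weight l" using disj inj by auto
    then show ?thesis using abs_weight[of l] flow unfolding zero_sum_flow_def by simp
  qed
  have "(\<Sum>b\<in>{b \<in> B0 \<union> block ` labels. p \<in> b}. ?g b) = 0" if p: "p < 2 * v + 7" for p
  proof -
    have "(\<Sum>b\<in>{b\<in>B0. p \<in> b}. f0 b) = 0"
    proof (cases "p < v")
      case True
      then show ?thesis using flow unfolding zero_sum_flow_def by simp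
    next
      case False
      then have "{b\<in>B0. p \<in> b} = {}" using B0_sub by auto
      then show ?thesis by (simp only: sum.empty)
    qed
    moreover have "(\<Sum>l\<in>{l\<in>labels. p \<in> block l}. weight l) = point_weight p"
      unfolding point_weight_def using finite_labels by (simp add: sum.inter_filter)
    ultimately show ?thesis
      using sum_extension_Un_image[OF finB0 finite_labels inj disj,
          where P = "\<lambda>b. p \<in> b" and g = f0]
        point_weight_zero[OF p] by simp
  qed
  then show ?thesis using flow bounded unfolding zero_sum_flow_def by auto
qed

end

theorem theorem2:
  fixes v k :: nat and X :: "'a set" and B :: "'a set set" and f :: "'a set \<Rightarrow> int"
  assumes "v > 9" and "v mod 4 = 1" and "k \<ge> 2"
    and "STS v X B" and "zero_sum_flow k X B f"
  shows "\<exists>(X' :: nat set) B' g. STS (2 * v + 7) X' B' \<and> zero_sum_flow k X' B' g"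
proof -
  obtain B0 :: "nat set set" and f0 where old: "STS v {..<v} B0" "zero_sum_flow k {..<v} B0 f0"
    using STS_zero_sum_flow_on_lessThan[OF assms(4,5)] by blast
  have "13 \<le> v" using assms(1,2) by presburger
  moreover have "odd v" using assms(2) by presburger
  ultimately interpret flow_doubling v by unfold_locales (use assms(2) in simp_all)
  show ?thesis using STS_doubling[OF old(1)] zero_sum_flow_doubling[OF old] by blast
qed

end
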